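(* Let $g:\mathbb{R}^m\to\mathbb{R}$ be separable convex, i.e. $g(v) = \sum_{i=1}^m g_i(v_i)$ with each $g_i:\mathbb{R}\to\mathbb{R}$ convex, and let $W\in\mathbb{Z}^{m\times n}$. Then $f(x) = g(Wx)$ admits a $\delta$-proximity with $\delta \le 2m(2m\|W\|_\infty + 1)^m$; that is, for every minimizer $x^\star$ of $f$ over $[0,1]^n$ with at most $m$ fractional entries there exists a minimizer $z^\star$ of $f$ over $\{0,1\}^n$ with $\|x^\star - z^\star\|_1 \le 2m(2m\|W\|_\infty + 1)^m$.
   Context: $\|W\|_\infty$ denotes the maximum absolute value of an entry of $W$. A fractional entry of $x\in[0,1]^n$ is an entry not in $\{0,1\}$. *)

theory Defs
  imports "HOL-Analysis.Analysis"
begin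

definition is_minimizer_on :: "('a \<Rightarrow> real) \<Rightarrow> 'a set \<Rightarrow> 'a \<Rightarrow> bool" where
  "is_minimizer_on f S x \<longleftrightarrow> x \<in> S \<and> (\<forall>y\<in>S. f x \<le> f y)"

definition unit_cube :: "(real ^ 'n) set" where
  "unit_cube = {x. \<forall>j. 0 \<le> x $ j \<and> x $ j \<le> 1}"

definition binary_vecs :: "(real ^ 'n) set" where
  "binary_vecs = {x. \<forall>j. x $ j \<in> {0, 1}}"

definition fractional_entries :: "real ^ 'n \<Rightarrow> 'n set" where
  "fractional_entries x = {j. x $ j \<notin> {0, 1}}"

definition max_abs_entry :: "int ^ 'n ^ 'm \<Rightarrow> int" where
  "max_abs_entry W = Max {\<bar>W $ i $ j\<bar> | i j. True}"

definition int_mat_vec :: "int ^ 'n ^ 'm \<Rightarrow> real ^ 'n \<Rightarrow> real ^ 'm" where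
  "int_mat_vec W x = (\<chi> i. \<Sum>j\<in>UNIV. of_int (W $ i $ j) * x $ j)"

definition l1_dist :: "real ^ 'n \<Rightarrow> real ^ 'n \<Rightarrow> real" where
  "l1_dist x z = (\<Sum>j\<in>UNIV. \<bar>x $ j - z $ j\<bar>)"

end

theory Submission
  imports Defs
begin

(* Let z be a binary minimizer of f that is closest to x* in the l1 distance, and suppose
   ||x* - z||_1 exceeds the bound. Apart from at most m fractional coordinates, x* and z differ
   on a set I of coordinates where x*_j - z_j = +-1, and the columns u_j = (x*_j - z_j) W_j have
   entries bounded by D = ||W||_oo and sum to W (x* - z) up to an error of m D in each row.
   Padding the u_j with unit vectors and with m small remainder vectors gives a zero-sum family;
   ordering it by the Steinitz lemma keeps all prefix sums in a box of side 2 m D + 1, so when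
   I is large two prefixes collide, and their difference yields a nonempty S within I whose
   column sum is sign-compatible with, and dominated by, W (x* - z) in every row.
   By convexity of each g_i, moving z to x* on S and x* to z on S does not increase
   f z + f x*. As x* is optimal on the cube, the new binary point is again a minimizer but is
   closer to x*, a contradiction. *)

section \<open>Steinitz lemma\<close>

lemma exists_nontrivial_linear_relation:
  fixes phi :: "'a \<Rightarrow> 'v::euclidean_space"
  assumes "finite F" "DIM('v) < card F"
  obtains y :: "'a \<Rightarrow> real" where "{a. y a \<noteq> 0} \<subseteq> F" "{a. y a \<noteq> 0} \<noteq> {}" "(\<Sum>a\<in>F. y a *\<^sub>R phi a) = 0"
proof (cases "inj_on phi F")
  case False
  then obtain a b where ab: "a \<in> F" "b \<in> F" "a \<noteq> b" "phi a = phi b"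
    by (auto simp: inj_on_def)
  define y :: "'a \<Rightarrow> real" where "y c = (if c = a then 1 else if c = b then -1 else 0)" for c :: 'a
  have "(\<Sum>c\<in>F. y c *\<^sub>R phi c) = (\<Sum>c\<in>{a, b}. y c *\<^sub>R phi c)"
    by (rule sum.mono_neutral_right) (use assms ab in \<open>auto simp: y_def\<close>)
  also have "\<dots> = 0"
    using ab by (simp add: y_def)
  finally show ?thesis
    using ab by (intro that[of y]) (auto simp: y_def)
next
  case True
  then have "dependent (phi ` F)"
    using assms by (intro dependent_biggerset) (simp add: card_image)
  then obtain T c where T: "finite T" "T \<subseteq> phi ` F" "\<exists>w\<in>T. c w \<noteq> 0" "(\<Sum>w\<in>T. c w *\<^sub>R w) = 0"
    unfolding dependent_explicit by blast
  define y where "y a = (if a \<in> F \<and> phi a \<in> T then c (phi a) else 0)" for a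
  have "(\<Sum>a\<in>F. y a *\<^sub>R phi a) = (\<Sum>w\<in>phi ` F. (if w \<in> T then c w else 0) *\<^sub>R w)"
    using True by (simp add: sum.reindex y_def)
  also have "\<dots> = (\<Sum>w\<in>T. c w *\<^sub>R w)"
    by (rule sum.mono_neutral_cong_right) (use assms T in auto)
  finally have "(\<Sum>a\<in>F. y a *\<^sub>R phi a) = 0"
    using T(4) by simp
  moreover from T obtain a where "a \<in> F" "phi a \<in> T" "c (phi a) \<noteq> 0"
    by blast
  then have "y a \<noteq> 0"
    by (simp add: y_def)
  ultimately show ?thesis
    by (intro that[of y]) (auto simp: y_def split: if_splits)
qed

lemma exists_step_to_boundary:
  fixes mu y :: "'a \<Rightarrow> real"
  assumes "finite Y" "Y \<noteq> {}" "\<forall>a\<in>Y. mu a \<in> {0<..<1} \<and> y a \<noteq> 0"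
  obtains t where "\<forall>a\<in>Y. mu a + t * y a \<in> {0..1}" "\<exists>a\<in>Y. mu a + t * y a \<in> {0, 1}"
proof -
  define slack where "slack a = (if 0 < y a then 1 - mu a else mu a)" for a
  define t where "t = Min ((\<lambda>a. slack a / \<bar>y a\<bar>) ` Y)"
  have slack: "0 < slack a" "0 < \<bar>y a\<bar>" if "a \<in> Y" for a
    using that assms(3) by (auto simp: slack_def)
  have "t \<in> (\<lambda>a. slack a / \<bar>y a\<bar>) ` Y"
    unfolding t_def using assms by (intro Min_in) auto
  then obtain a0 where a0: "a0 \<in> Y" "t * \<bar>y a0\<bar> = slack a0"
    using slack by fastforce
  then have "0 < t * \<bar>y a0\<bar>"
    using slack[OF a0(1)] by simp
  then have "0 < t"
    by (simp add: zero_less_mult_iff)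
  have "mu a + t * y a \<in> {0..1}" if "a \<in> Y" for a
  proof -
    have "t \<le> slack a / \<bar>y a\<bar>"
      using that assms(1) by (simp add: t_def)
    then have "t * \<bar>y a\<bar> \<le> slack a"
      using slack[OF that] by (simp add: pos_le_divide_eq)
    moreover have "0 < t * \<bar>y a\<bar>"
      using \<open>0 < t\<close> slack[OF that] by simp
    ultimately show ?thesis
      using that assms(3) by (auto simp: slack_def abs_if split: if_splits)
  qed
  moreover have "mu a0 + t * y a0 \<in> {0, 1}"
    using a0 by (auto simp: slack_def abs_if split: if_splits)
  ultimately show ?thesis
    using a0(1) that by blast
qed

lemma reduce_fractional_support_step:
  fixes phi :: "'a \<Rightarrow> 'v::euclidean_space"
  assumes B: "finite B" and mu: "\<forall>a\<in>B. mu a \<in> {0..1}"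
    and large: "DIM('v) < card {a\<in>B. mu a \<in> {0<..<1}}"
  obtains mu' where "\<forall>a\<in>B. mu' a \<in> {0..1}"
    "(\<Sum>a\<in>B. mu' a *\<^sub>R phi a) = (\<Sum>a\<in>B. mu a *\<^sub>R phi a)"
    "card {a\<in>B. mu' a \<in> {0<..<1}} < card {a\<in>B. mu a \<in> {0<..<1}}"
proof -
  define Fr where "Fr = {a\<in>B. mu a \<in> {0<..<1}}"
  have Fr: "finite Fr" "Fr \<subseteq> B"
    using B by (auto simp: Fr_def)
  obtain y where y: "{a. y a \<noteq> 0} \<subseteq> Fr" "{a. y a \<noteq> 0} \<noteq> {}" "(\<Sum>a\<in>Fr. y a *\<^sub>R phi a) = 0"
    using exists_nontrivial_linear_relation[OF Fr(1)] large by (auto simp: Fr_def)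
  define Y where "Y = {a. y a \<noteq> 0}"
  have "finite Y" "Y \<noteq> {}" "\<forall>a\<in>Y. mu a \<in> {0<..<1} \<and> y a \<noteq> 0"
    using y(1,2) Fr(1) finite_subset unfolding Y_def Fr_def by auto
  then obtain t where t: "\<forall>a\<in>Y. mu a + t * y a \<in> {0..1}" "\<exists>a\<in>Y. mu a + t * y a \<in> {0, 1}"
    by (rule exists_step_to_boundary)
  define mu' where "mu' a = mu a + t * y a" for a
  have mu'_01: "mu' a \<in> {0..1}" if "a \<in> B" for a
    using that t(1) mu by (cases "y a = 0") (auto simp: mu'_def Y_def)
  have "(\<Sum>a\<in>B. y a *\<^sub>R phi a) = (\<Sum>a\<in>Fr. y a *\<^sub>R phi a)"
    using y(1) Fr B by (intro sum.mono_neutral_right) auto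
  then have mu'_sum: "(\<Sum>a\<in>B. mu' a *\<^sub>R phi a) = (\<Sum>a\<in>B. mu a *\<^sub>R phi a)"
    using y(3)
    by (simp add: mu'_def scaleR_add_left sum.distrib flip: scaleR_sum_right scaleR_scaleR)
  obtain a0 where a0: "a0 \<in> Fr" "mu' a0 \<in> {0, 1}"
    using t(2) y(1) by (auto simp: mu'_def Y_def)
  have "{a\<in>B. mu' a \<in> {0<..<1}} \<subseteq> Fr - {a0}"
  proof
    fix a assume a: "a \<in> {a\<in>B. mu' a \<in> {0<..<1}}"
    have "a \<in> Fr"
      using a y(1) by (cases "y a = 0") (auto simp: Fr_def mu'_def)
    moreover have "a \<noteq> a0"
      using a a0(2) by auto
    ultimately show "a \<in> Fr - {a0}"
      by simp
  qed
  then have "card {a\<in>B. mu' a \<in> {0<..<1}} \<le> card (Fr - {a0})"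
    using Fr(1) by (intro card_mono) auto
  also have "\<dots> < card Fr"
    using Fr(1) a0(1) by (rule card_Diff1_less)
  finally have "card {a\<in>B. mu' a \<in> {0<..<1}} < card {a\<in>B. mu a \<in> {0<..<1}}"
    by (simp add: Fr_def)
  then show ?thesis
    using that mu'_01 mu'_sum by blast
qed

lemma reduce_fractional_support:
  fixes phi :: "'a \<Rightarrow> 'v::euclidean_space"
  assumes "finite B" "\<forall>a\<in>B. mu a \<in> {0..1}"
  obtains mu' where "\<forall>a\<in>B. mu' a \<in> {0..1}"
    "(\<Sum>a\<in>B. mu' a *\<^sub>R phi a) = (\<Sum>a\<in>B. mu a *\<^sub>R phi a)"
    "card {a\<in>B. mu' a \<in> {0<..<1}} \<le> DIM('v)"
proof -
  have "\<exists>mu'. (\<forall>a\<in>B. mu' a \<in> {0..1}) \<and>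
      (\<Sum>a\<in>B. mu' a *\<^sub>R phi a) = (\<Sum>a\<in>B. mu a *\<^sub>R phi a) \<and>
      card {a\<in>B. mu' a \<in> {0<..<1}} \<le> DIM('v)"
    using assms(2)
  proof (induction "card {a\<in>B. mu a \<in> {0<..<1}}" arbitrary: mu rule: less_induct)
    case less
    show ?case
    proof (cases "card {a\<in>B. mu a \<in> {0<..<1}} \<le> DIM('v)")
      case True
      then show ?thesis
        using less.prems by blast
    next
      case False
      then have "DIM('v) < card {a\<in>B. mu a \<in> {0<..<1}}"
        by simp
      then obtain mu' where mu': "\<forall>a\<in>B. mu' a \<in> {0..1}"
          "(\<Sum>a\<in>B. mu' a *\<^sub>R phi a) = (\<Sum>a\<in>B. mu a *\<^sub>R phi a)"
          "card {a\<in>B. mu' a \<in> {0<..<1}} < card {a\<in>B. mu a \<in> {0<..<1}}"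
        by (rule reduce_fractional_support_step[OF assms(1) less.prems])
      then obtain mu'' where "\<forall>a\<in>B. mu'' a \<in> {0..1}"
          "(\<Sum>a\<in>B. mu'' a *\<^sub>R phi a) = (\<Sum>a\<in>B. mu' a *\<^sub>R phi a)"
          "card {a\<in>B. mu'' a \<in> {0<..<1}} \<le> DIM('v)"
        using less.hyps[of mu'] by blast
      then show ?thesis
        using mu'(2) by (intro exI[of _ mu'']) simp
    qed
  qed
  then show ?thesis
    using that by blast
qed

definition prefix_sums_bounded :: "('a \<Rightarrow> 'v::euclidean_space) \<Rightarrow> real \<Rightarrow> 'a list \<Rightarrow> bool" where
  "prefix_sums_bounded v C xs \<longleftrightarrow>
     (\<forall>j\<le>length xs. \<forall>i\<in>Basis. \<bar>(\<Sum>a\<in>set (take j xs). v a) \<bullet> i\<bar> \<le> C)"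

lemma prefix_sums_bounded_snoc:
  "prefix_sums_bounded v C (xs @ [x]) \<longleftrightarrow>
     prefix_sums_bounded v C xs \<and> (\<forall>i\<in>Basis. \<bar>(\<Sum>a\<in>set (xs @ [x]). v a) \<bullet> i\<bar> \<le> C)"
  by (auto simp: prefix_sums_bounded_def le_Suc_eq)

lemma abs_inner_sum_le:
  fixes v :: "'a \<Rightarrow> 'v::euclidean_space" and D :: real
  assumes "finite S" "\<forall>a\<in>S. \<bar>v a \<bullet> i\<bar> \<le> D"
  shows "\<bar>(\<Sum>a\<in>S. v a) \<bullet> i\<bar> \<le> real (card S) * D"
proof -
  have "\<bar>(\<Sum>a\<in>S. v a) \<bullet> i\<bar> \<le> (\<Sum>a\<in>S. \<bar>v a \<bullet> i\<bar>)"
    by (simp add: inner_sum_left)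
  also have "\<dots> \<le> (\<Sum>a\<in>S. D)"
    using assms(2) by (intro sum_mono) auto
  finally show ?thesis
    by simp
qed

lemma prefix_sums_bounded_of_length_le:
  fixes v :: "'a \<Rightarrow> 'v::euclidean_space" and D :: real
  assumes "length xs \<le> DIM('v)" "0 \<le> D" "\<forall>a\<in>set xs. \<forall>i\<in>Basis. \<bar>v a \<bullet> i\<bar> \<le> D"
  shows "prefix_sums_bounded v (DIM('v) * D) xs"
  unfolding prefix_sums_bounded_def
proof (intro allI impI ballI)
  fix j and i :: 'v
  assume "i \<in> Basis"
  have "\<bar>(\<Sum>a\<in>set (take j xs). v a) \<bullet> i\<bar> \<le> real (card (set (take j xs))) * D"
    using assms(3) \<open>i \<in> Basis\<close> by (intro abs_inner_sum_le) (auto dest: in_set_takeD)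
  also have "\<dots> \<le> DIM('v) * D"
    using card_length[of "take j xs"] assms(1,2) by (intro mult_right_mono) auto
  finally show "\<bar>(\<Sum>a\<in>set (take j xs). v a) \<bullet> i\<bar> \<le> DIM('v) * D" .
qed

lemma abs_inner_sum_le_weighted:
  fixes v :: "'a \<Rightarrow> 'v::euclidean_space" and lam :: "'a \<Rightarrow> real"
  assumes "finite B" "\<forall>a\<in>B. lam a \<in> {0..1}" "\<forall>a\<in>B. \<bar>v a \<bullet> i\<bar> \<le> D"
    "(\<Sum>a\<in>B. lam a *\<^sub>R v a) = 0"
  shows "\<bar>(\<Sum>a\<in>B. v a) \<bullet> i\<bar> \<le> (card B - sum lam B) * D"
proof -
  have "(\<Sum>a\<in>B. v a) = (\<Sum>a\<in>B. (1 - lam a) *\<^sub>R v a)"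
    using assms(4) by (simp add: scaleR_diff_left sum_subtractf)
  then have "\<bar>(\<Sum>a\<in>B. v a) \<bullet> i\<bar> \<le> (\<Sum>a\<in>B. \<bar>(1 - lam a) * (v a \<bullet> i)\<bar>)"
    by (simp add: inner_sum_left)
  also have "\<dots> \<le> (\<Sum>a\<in>B. (1 - lam a) * D)"
    using assms(2,3) by (intro sum_mono) (auto simp: abs_mult intro: mult_left_mono)
  also have "\<dots> = (card B - sum lam B) * D"
    by (simp add: sum_subtractf left_diff_distrib flip: sum_distrib_right)
  finally show ?thesis .
qed

lemma exists_zero_weight:
  fixes mu :: "'a \<Rightarrow> real"
  assumes B: "finite B" "card B = Suc k" and d: "d \<le> k"
    and mu: "\<forall>a\<in>B. mu a \<in> {0..1}" "sum mu B = real k - real d"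
      "card {a\<in>B. mu a \<in> {0<..<1}} \<le> d + 1"
  obtains a where "a \<in> B" "mu a = 0"
proof (rule ccontr)
  assume no_zero: "\<not> thesis"
  define Fr where "Fr = {a\<in>B. mu a \<in> {0<..<1}}"
  have Fr: "Fr \<subseteq> B" "finite Fr" "card Fr \<le> d + 1"
    using B(1) mu(3) by (auto simp: Fr_def)
  have "\<forall>a\<in>B - Fr. mu a = 1"
    using no_zero that mu(1) by (force simp: Fr_def)
  then have "sum mu B = sum mu Fr + card (B - Fr)"
    using sum.subset_diff[OF Fr(1) B(1), of mu] by simp
  moreover have "card (B - Fr) = Suc k - card Fr"
    using Fr B by (simp add: card_Diff_subset)
  moreover have "0 < sum mu Fr" if "Fr \<noteq> {}"
    using that Fr(2) by (intro sum_pos) (auto simp: Fr_def)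
  ultimately show False
    using mu(2) Fr(3) B(2) d by (cases "Fr = {}") auto
qed

text \<open>Scaling \<open>lam\<close> by \<open>c\<close> makes the weight constraint that of a set with one element fewer;
  a solution with at most \<open>DIM('v) + 1\<close> fractional weights then has a zero weight.\<close>

lemma steinitz_drop_element:
  fixes v :: "'a \<Rightarrow> 'v::euclidean_space" and lam :: "'a \<Rightarrow> real"
  assumes B: "finite B" "card B = Suc k" and k: "DIM('v) \<le> k"
    and lam: "\<forall>a\<in>B. lam a \<in> {0..1}" "(\<Sum>a\<in>B. lam a *\<^sub>R v a) = 0"
      "sum lam B = real (Suc k) - DIM('v)"
  obtains a lam' where "a \<in> B" "\<forall>b\<in>B - {a}. lam' b \<in> {0..1}"
    "(\<Sum>b\<in>B - {a}. lam' b *\<^sub>R v b) = 0" "sum lam' (B - {a}) = real k - DIM('v)"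
proof -
  define c where "c = (real k - DIM('v)) / (real (Suc k) - DIM('v))"
  have c: "0 \<le> c" "c \<le> 1"
    using k by (auto simp: c_def field_simps)
  then have "\<forall>a\<in>B. c * lam a \<in> {0..1}"
    using lam(1) by (auto simp: mult_le_one)
  then obtain mu where mu: "\<forall>a\<in>B. mu a \<in> {0..1}"
      "(\<Sum>a\<in>B. mu a *\<^sub>R (v a, 1::real)) = (\<Sum>a\<in>B. (c * lam a) *\<^sub>R (v a, 1))"
      "card {a\<in>B. mu a \<in> {0<..<1}} \<le> DIM('v \<times> real)"
    by (rule reduce_fractional_support[OF B(1)])
  have mu_v: "(\<Sum>a\<in>B. mu a *\<^sub>R v a) = 0"
    using arg_cong[OF mu(2), of fst] lam(2)
    by (simp add: fst_sum flip: scaleR_scaleR scaleR_sum_right)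
  have "sum mu B = c * sum lam B"
    using arg_cong[OF mu(2), of snd] by (simp add: snd_sum sum_distrib_left)
  then have mu_sum: "sum mu B = real k - DIM('v)"
    using lam(3) k by (simp add: c_def)
  obtain a where a: "a \<in> B" "mu a = 0"
    using exists_zero_weight[OF B k mu(1) mu_sum] mu(3) by auto
  then have "(\<Sum>b\<in>B - {a}. mu b *\<^sub>R v b) = 0" "sum mu (B - {a}) = real k - DIM('v)"
    using mu_v mu_sum B(1) by (simp_all add: sum_diff1)
  then show ?thesis
    using that a(1) mu(1) by blast
qed

lemma steinitz_ordering_weighted:
  fixes v :: "'a \<Rightarrow> 'v::euclidean_space" and lam :: "'a \<Rightarrow> real" and D :: real
  assumes "finite B" "card B = DIM('v) + n" "\<forall>a\<in>B. lam a \<in> {0..1}"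
    "(\<Sum>a\<in>B. lam a *\<^sub>R v a) = 0" "sum lam B = real n"
    "0 \<le> D" "\<forall>a\<in>B. \<forall>i\<in>Basis. \<bar>v a \<bullet> i\<bar> \<le> D"
  shows "\<exists>xs. distinct xs \<and> set xs = B \<and> prefix_sums_bounded v (DIM('v) * D) xs"
  using assms
proof (induction n arbitrary: B lam)
  case 0
  obtain xs where xs: "set xs = B" "distinct xs"
    using finite_distinct_list[OF 0(1)] by blast
  then have "length xs \<le> DIM('v)"
    using 0(2) distinct_card by fastforce
  then show ?case
    using xs 0(6,7) prefix_sums_bounded_of_length_le by blast
next
  case (Suc n)
  obtain a lam' where a: "a \<in> B" "\<forall>b\<in>B - {a}. lam' b \<in> {0..1}"
    "(\<Sum>b\<in>B - {a}. lam' b *\<^sub>R v b) = 0" "sum lam' (B - {a}) = real (DIM('v) + n) - DIM('v)"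
    using steinitz_drop_element[of B "DIM('v) + n" lam v] Suc.prems(1-5) by auto
  moreover have "card (B - {a}) = DIM('v) + n"
    using a(1) Suc.prems(1,2) by simp
  ultimately obtain ys where ys: "distinct ys" "set ys = B - {a}"
      "prefix_sums_bounded v (DIM('v) * D) ys"
    using Suc.IH[of "B - {a}" lam'] Suc.prems(1,6,7) by auto
  have "\<forall>i\<in>Basis. \<bar>(\<Sum>b\<in>B. v b) \<bullet> i\<bar> \<le> DIM('v) * D"
    using abs_inner_sum_le_weighted[of B lam v] Suc.prems by simp
  moreover have "set (ys @ [a]) = B"
    using ys(2) a(1) by auto
  ultimately show ?case
    using ys a(1) by (intro exI[of _ "ys @ [a]"]) (simp add: prefix_sums_bounded_snoc)
qed

theorem steinitz_lemma:
  fixes v :: "'a \<Rightarrow> 'v::euclidean_space" and D :: real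
  assumes "finite A" "0 \<le> D" "\<forall>a\<in>A. \<forall>i\<in>Basis. \<bar>v a \<bullet> i\<bar> \<le> D" "(\<Sum>a\<in>A. v a) = 0"
  obtains xs where "distinct xs" "set xs = A" "prefix_sums_bounded v (DIM('v) * D) xs"
proof (cases "card A \<le> DIM('v)")
  case True
  obtain xs where "set xs = A" "distinct xs"
    using finite_distinct_list[OF assms(1)] by blast
  then show ?thesis
    using True assms(2,3) that prefix_sums_bounded_of_length_le distinct_card by metis
next
  case False
  define n where "n = card A - DIM('v)"
  define lam :: "'a \<Rightarrow> real" where "lam a = n / card A" for a
  have "card A = DIM('v) + n" "0 < card A"
    using False by (auto simp: n_def)
  moreover from this have "\<forall>a\<in>A. lam a \<in> {0..1}" "sum lam A = real n"
    by (auto simp: lam_def divide_le_eq_1)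
  moreover have "(\<Sum>a\<in>A. lam a *\<^sub>R v a) = 0"
    using assms(4) by (simp add: lam_def flip: scaleR_sum_right)
  ultimately show ?thesis
    using steinitz_ordering_weighted[of A n lam v D] assms that by blast
qed

section \<open>Sign-compatible subsums of bounded integer vectors\<close>

lemma split_into_bounded_parts:
  fixes e D :: int
  assumes "0 < m" "\<bar>e\<bar> \<le> int m * D"
  obtains p :: "nat \<Rightarrow> int" where "(\<Sum>l<m. p l) = e" "\<forall>l. \<bar>p l\<bar> \<le> D"
proof -
  have "\<exists>p :: nat \<Rightarrow> int. (\<Sum>l<m. p l) = e \<and> (\<forall>l. \<bar>p l\<bar> \<le> D)"
    using assms
  proof (induction m arbitrary: e)
    case 0
    then show ?case
      by simp
  next
    case (Suc m)
    have e: "\<bar>e\<bar> \<le> D + int m * D"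
      using Suc.prems(2) by (simp add: distrib_right)
    show ?case
    proof (cases "m = 0")
      case True
      then show ?thesis
        using e by (intro exI[of _ "\<lambda>_. e"]) simp
    next
      case False
      have "0 \<le> int (Suc m) * D"
        using Suc.prems(2) abs_ge_zero order_trans by blast
      then have D: "0 \<le> D"
        by (simp add: zero_le_mult_iff)
      define q where "q = max (- D) (min D e)"
      have "0 \<le> int m * D"
        using D by simp
      then have "\<bar>e - q\<bar> \<le> int m * D" "\<bar>q\<bar> \<le> D"
        using e D by (auto simp: q_def abs_le_iff max_def min_def)
      then obtain p where p: "(\<Sum>l<m. p l) = e - q" "\<forall>l. \<bar>p l\<bar> \<le> D"
        using Suc.IH False by blast
      have "(\<Sum>l<Suc m. (p(m := q)) l) = e"
        using p(1) by simp
      then show ?thesis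
        using p(2) \<open>\<bar>q\<bar> \<le> D\<close> by (intro exI[of _ "p(m := q)"]) simp
    qed
  qed
  then show ?thesis
    using that by blast
qed

corollary steinitz_lemma_int:
  fixes w :: "'a \<Rightarrow> 'm::finite \<Rightarrow> int"
  assumes A: "finite A" and D: "0 \<le> D" "\<forall>x\<in>A. \<forall>i. \<bar>w x i\<bar> \<le> D"
    and zero: "\<forall>i. (\<Sum>x\<in>A. w x i) = 0"
  obtains xs where "distinct xs" "set xs = A"
    "\<forall>j\<le>length xs. \<forall>i. \<bar>\<Sum>x\<in>set (take j xs). w x i\<bar> \<le> int CARD('m) * D"
proof -
  define v :: "'a \<Rightarrow> real^'m" where "v x = (\<chi> i. of_int (w x i))" for x
  have "\<forall>x\<in>A. \<forall>i\<in>Basis. \<bar>v x \<bullet> i\<bar> \<le> of_int D"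
    using D(2) by (auto simp: Basis_vec_def inner_axis v_def simp flip: of_int_abs)
  moreover have "(\<Sum>x\<in>A. v x) = 0"
    using zero by (simp add: v_def vec_eq_iff flip: of_int_sum)
  ultimately obtain xs where xs: "distinct xs" "set xs = A"
      "prefix_sums_bounded v (DIM(real^'m) * of_int D) xs"
    using steinitz_lemma[OF A, of "of_int D" v] D(1) by auto
  have "\<bar>\<Sum>x\<in>set (take j xs). w x i\<bar> \<le> int CARD('m) * D" if "j \<le> length xs" for j i
  proof -
    have "axis i (1::real) \<in> Basis"
      by (auto simp: Basis_vec_def)
    then have "\<bar>(\<Sum>x\<in>set (take j xs). v x) \<bullet> axis i 1\<bar> \<le> CARD('m) * of_int D"
      using xs(3) that by (simp add: prefix_sums_bounded_def)
    then have "real_of_int \<bar>\<Sum>x\<in>set (take j xs). w x i\<bar> \<le> real_of_int (int CARD('m) * D)"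
      by (simp add: inner_axis v_def)
    then show ?thesis
      by (simp only: of_int_le_iff)
  qed
  then show ?thesis
    using that xs(1,2) by blast
qed

lemma zero_sum_between_prefixes:
  fixes w :: "'a \<Rightarrow> 'm \<Rightarrow> int"
  assumes xs: "distinct xs" and kl: "k < l" "l \<le> length xs"
    and same: "card (set (take k xs) \<inter> J) = card (set (take l xs) \<inter> J)"
      "\<forall>i. (\<Sum>x\<in>set (take k xs). w x i) = (\<Sum>x\<in>set (take l xs). w x i)"
  defines "Q \<equiv> set (take l xs) - set (take k xs)"
  shows "Q \<subseteq> set xs - J" "Q \<noteq> {}" "\<forall>i. (\<Sum>x\<in>Q. w x i) = 0"
proof -
  have sub: "set (take k xs) \<subseteq> set (take l xs)"
    using kl(1) by (simp add: set_take_subset_set_take)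
  then have "set (take k xs) \<inter> J = set (take l xs) \<inter> J"
    using same(1) by (intro card_subset_eq) auto
  then show "Q \<subseteq> set xs - J"
    by (auto simp: Q_def dest: in_set_takeD)
  have "card (set (take k xs)) < card (set (take l xs))"
    using xs kl by (simp add: distinct_card)
  then show "Q \<noteq> {}"
    using sub by (auto simp: Q_def)
  show "\<forall>i. (\<Sum>x\<in>Q. w x i) = 0"
    using same(2) sub by (simp add: Q_def sum_diff)
qed

lemma pigeonhole_atMost:
  fixes phi :: "nat \<Rightarrow> 'b"
  assumes "phi ` {..n} \<subseteq> K" "finite K" "card K \<le> n"
  obtains k l where "k < l" "l \<le> n" "phi k = phi l"
proof -
  have "\<not> inj_on phi {..n}"
    using card_inj_on_le[of phi "{..n}" K] assms by auto
  then obtain k l where "k \<le> n" "l \<le> n" "k \<noteq> l" "phi k = phi l"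
    unfolding inj_on_def by auto
  then show ?thesis
    using that[of k l] that[of l k] by (cases "k < l") auto
qed

lemma exists_zero_sum_subset_avoiding:
  fixes w :: "'a \<Rightarrow> 'm::finite \<Rightarrow> int"
  assumes A: "finite A" "J \<subseteq> A" and D: "0 \<le> D" "\<forall>x\<in>A. \<forall>i. \<bar>w x i\<bar> \<le> D"
    and zero: "\<forall>i. (\<Sum>x\<in>A. w x i) = 0"
    and size: "(int (card J) + 1) * (2 * int CARD('m) * D + 1) ^ CARD('m) \<le> int (card A)"
  obtains Q where "Q \<subseteq> A - J" "Q \<noteq> {}" "\<forall>i. (\<Sum>x\<in>Q. w x i) = 0"
proof -
  define B where "B = int CARD('m) * D"
  obtain xs where xs: "distinct xs" "set xs = A"
      and bounded: "\<forall>j\<le>length xs. \<forall>i. \<bar>\<Sum>x\<in>set (take j xs). w x i\<bar> \<le> B"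
    using steinitz_lemma_int[OF A(1) D zero] unfolding B_def by blast
  have len: "length xs = card A"
    using xs distinct_card by fastforce
  define P where "P k = set (take k xs)" for k
  define phi where "phi k = (card (P k \<inter> J), \<lambda>i. \<Sum>x\<in>P k. w x i)" for k
  define K where "K = {..card J} \<times> ((UNIV :: 'm set) \<rightarrow>\<^sub>E {-B..B})"
  have "phi k \<in> K" if "k \<le> card A" for k
  proof -
    have "card (P k \<inter> J) \<le> card J"
      using finite_subset[OF A(2,1)] by (intro card_mono) auto
    moreover have "(\<Sum>x\<in>P k. w x i) \<in> {-B..B}" for i
    proof -
      have "\<bar>\<Sum>x\<in>P k. w x i\<bar> \<le> B"
        using bounded that len by (simp add: P_def)
      then show ?thesis
        by (simp add: abs_le_iff)
    qed
    ultimately show ?thesis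
      by (simp add: phi_def K_def PiE_iff)
  qed
  then have "phi ` {..card A} \<subseteq> K"
    by auto
  moreover have "finite K"
    by (simp add: K_def finite_PiE)
  moreover have "card K \<le> card A"
  proof -
    have "int (card K) = (int (card J) + 1) * (2 * B + 1) ^ CARD('m)"
      using D(1) by (simp add: K_def card_cartesian_product card_PiE B_def algebra_simps)
    then show ?thesis
      using size by (simp add: B_def mult.assoc)
  qed
  ultimately obtain k l where kl: "k < l" "l \<le> card A" "phi k = phi l"
    by (rule pigeonhole_atMost)
  then show ?thesis
    using that zero_sum_between_prefixes[OF xs(1) kl(1,2)[folded len], of J w]
    by (simp add: phi_def P_def xs(2) fun_eq_iff)
qed

text \<open>Elements \<open>Inr (Inl (i, k))\<close> with \<open>k < \<bar>r i\<bar>\<close> stand for copies of the unit vector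
  \<open>- sgn (r i) e\<^sub>i\<close>, and \<open>Inr (Inr l)\<close> with \<open>l < CARD('m)\<close> for the parts of the remainder
  \<open>\<Sum>u - r\<close>; together with the \<open>u j\<close> they sum to zero.\<close>

definition padded_family ::
    "('a \<Rightarrow> 'm \<Rightarrow> int) \<Rightarrow> ('m \<Rightarrow> int) \<Rightarrow> ('m \<Rightarrow> nat \<Rightarrow> int) \<Rightarrow> 'a + ('m \<times> nat) + nat \<Rightarrow> 'm \<Rightarrow> int"
  where "padded_family u r p x i = (case x of
      Inl j \<Rightarrow> u j i
    | Inr (Inl (k, _)) \<Rightarrow> if k = i then - sgn (r i) else 0
    | Inr (Inr l) \<Rightarrow> - p i l)"

lemma sum_padded_family:
  assumes "finite S" "finite V" "finite L"
  shows "(\<Sum>x\<in>Inl ` S \<union> Inr ` Inl ` V \<union> Inr ` Inr ` L. padded_family u r p x i) =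
    (\<Sum>j\<in>S. u j i) - sgn (r i) * int (card {v\<in>V. fst v = i}) - (\<Sum>l\<in>L. p i l)"
proof -
  let ?w = "\<lambda>x. padded_family u r p x i"
  have "(\<Sum>x\<in>Inl ` S \<union> Inr ` Inl ` V \<union> Inr ` Inr ` L. ?w x) =
      (\<Sum>x\<in>Inl ` S. ?w x) + (\<Sum>x\<in>Inr ` Inl ` V. ?w x) + (\<Sum>x\<in>Inr ` Inr ` L. ?w x)"
    using assms by (subst sum.union_disjoint; auto)+
  also have "(\<Sum>x\<in>Inr ` Inl ` V. ?w x) = (\<Sum>v\<in>V. if fst v = i then - sgn (r i) else 0)"
    by (simp add: sum.reindex inj_on_def padded_family_def case_prod_beta)
  also have "\<dots> = - sgn (r i) * int (card {v\<in>V. fst v = i})"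
    using assms(2) by (simp add: sum.If_cases Int_def)
  finally show ?thesis
    by (simp add: sum.reindex padded_family_def sum_negf)
qed

lemma padded_family_balanced:
  fixes u :: "'a \<Rightarrow> 'm::finite \<Rightarrow> int" and r :: "'m \<Rightarrow> int"
  assumes I: "finite I" and D: "1 \<le> D" "\<forall>j\<in>I. \<forall>i. \<bar>u j i\<bar> \<le> D"
    and close: "\<forall>i. \<bar>(\<Sum>j\<in>I. u j i) - r i\<bar> \<le> int CARD('m) * D"
  defines "A \<equiv> Inl ` I \<union> Inr ` Inl ` (SIGMA i:UNIV. {..<nat \<bar>r i\<bar>}) \<union> Inr ` Inr ` {..<CARD('m)}"
  obtains p where "\<forall>x\<in>A. \<forall>i. \<bar>padded_family u r p x i\<bar> \<le> D"
    "\<forall>i. (\<Sum>x\<in>A. padded_family u r p x i) = 0"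
proof -
  have "\<forall>i. \<exists>q :: nat \<Rightarrow> int. (\<Sum>l<CARD('m). q l) = (\<Sum>j\<in>I. u j i) - r i \<and> (\<forall>l. \<bar>q l\<bar> \<le> D)"
    using split_into_bounded_parts[of "CARD('m)"] close by (metis zero_less_card_finite)
  then obtain p where p: "\<forall>i. (\<Sum>l<CARD('m). p i l) = (\<Sum>j\<in>I. u j i) - r i"
      "\<forall>i l. \<bar>p i l\<bar> \<le> D"
    by metis
  have "\<forall>x\<in>A. \<forall>i. \<bar>padded_family u r p x i\<bar> \<le> D"
    using D p(2) by (auto simp: A_def padded_family_def sgn_if)
  moreover have "(\<Sum>x\<in>A. padded_family u r p x i) = 0" for i
  proof -
    have "{v\<in>SIGMA i:UNIV. {..<nat \<bar>r i\<bar>}. fst v = i} = {i} \<times> {..<nat \<bar>r i\<bar>}"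
      by auto
    then have "sgn (r i) * int (card {v\<in>SIGMA i:UNIV. {..<nat \<bar>r i\<bar>}. fst v = i}) = r i"
      by (simp add: card_cartesian_product sgn_mult_abs)
    then show ?thesis
      using sum_padded_family[OF I, of "SIGMA i:UNIV. {..<nat \<bar>r i\<bar>}" "{..<CARD('m)}" u r p i] p(1)
      by (simp add: A_def)
  qed
  ultimately show ?thesis
    using that by blast
qed

lemma sgn_mult_in_closed_segment:
  fixes r n :: int
  assumes "0 \<le> n" "n \<le> \<bar>r\<bar>"
  shows "real_of_int (sgn r * n) \<in> closed_segment 0 (real_of_int r)"
  using assms by (auto simp: closed_segment_eq_real_ivl sgn_if)

lemma conformal_of_balanced_padding:
  fixes u :: "'a \<Rightarrow> 'm::finite \<Rightarrow> int" and r :: "'m \<Rightarrow> int"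
  assumes V: "V \<subseteq> (SIGMA i:UNIV. {..<nat \<bar>r i\<bar>})" and nonempty: "S \<noteq> {} \<or> V \<noteq> {}"
    and balanced: "\<forall>i. (\<Sum>j\<in>S. u j i) = sgn (r i) * int (card {v\<in>V. fst v = i})"
  shows "S \<noteq> {}" "\<forall>i. real_of_int (\<Sum>j\<in>S. u j i) \<in> closed_segment 0 (real_of_int (r i))"
proof -
  have finite: "finite {v\<in>V. fst v = i}" for i
    using V by (rule finite_subset[OF subset_trans[OF Collect_restrict]]) auto
  show "\<forall>i. real_of_int (\<Sum>j\<in>S. u j i) \<in> closed_segment 0 (real_of_int (r i))"
  proof
    fix i
    have "card {v\<in>V. fst v = i} \<le> card ({i} \<times> {..<nat \<bar>r i\<bar>})"
      using V by (intro card_mono) auto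
    then have "int (card {v\<in>V. fst v = i}) \<le> \<bar>r i\<bar>"
      by (simp add: card_cartesian_product)
    then have "real_of_int (sgn (r i) * int (card {v\<in>V. fst v = i}))
        \<in> closed_segment 0 (real_of_int (r i))"
      by (intro sgn_mult_in_closed_segment) auto
    then show "real_of_int (\<Sum>j\<in>S. u j i) \<in> closed_segment 0 (real_of_int (r i))"
      by (simp only: balanced[rule_format])
  qed
  show "S \<noteq> {}"
  proof
    assume "S = {}"
    then obtain v where v: "v \<in> V"
      using nonempty by blast
    then have "r (fst v) \<noteq> 0"
      using V by auto
    then have "card {v'\<in>V. fst v' = fst v} = 0"
      using balanced[rule_format, of "fst v"] \<open>S = {}\<close> by (simp add: sgn_0_0)
    then show False
      using v finite[of "fst v"] by (simp add: card_eq_0_iff) (metis prod.collapse)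
  qed
qed

lemma exists_conformal_subsum_int:
  fixes u :: "'a \<Rightarrow> 'm::finite \<Rightarrow> int" and r :: "'m \<Rightarrow> int"
  assumes I: "finite I" and D: "0 \<le> D" "\<forall>j\<in>I. \<forall>i. \<bar>u j i\<bar> \<le> D"
    and close: "\<forall>i. \<bar>(\<Sum>j\<in>I. u j i) - r i\<bar> \<le> int CARD('m) * D"
    and size: "(int CARD('m) + 1) * (2 * int CARD('m) * D + 1) ^ CARD('m) \<le> int (card I + CARD('m))"
  obtains S where "S \<subseteq> I" "S \<noteq> {}"
    "\<forall>i. real_of_int (\<Sum>j\<in>S. u j i) \<in> closed_segment 0 (real_of_int (r i))"
proof (cases "D = 0")
  case True
  then obtain j where "j \<in> I"
    using size by fastforce
  then show ?thesis
    using that[of "{j}"] D(2) True by simp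
next
  case False
  define U where "U = (SIGMA i:UNIV. {..<nat \<bar>r i\<bar>})"
  define J :: "('a + ('m \<times> nat) + nat) set" where "J = Inr ` Inr ` {..<CARD('m)}"
  define A where "A = Inl ` I \<union> Inr ` Inl ` U \<union> J"
  obtain p where p: "\<forall>x\<in>A. \<forall>i. \<bar>padded_family u r p x i\<bar> \<le> D"
      "\<forall>i. (\<Sum>x\<in>A. padded_family u r p x i) = 0"
    using padded_family_balanced[OF I _ D(2) close] False D(1) by (auto simp: A_def U_def J_def)
  have "finite U"
    by (simp add: U_def)
  then have "card A = card I + card U + CARD('m)"
    using I unfolding A_def J_def
    by (subst card_Un_disjoint; auto simp: card_Un_disjoint card_image)+
  moreover have "card J = CARD('m)"
    by (simp add: J_def card_image)
  ultimately have "(int (card J) + 1) * (2 * int CARD('m) * D + 1) ^ CARD('m) \<le> int (card A)"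
    using size by simp
  moreover have "finite A" "J \<subseteq> A"
    using I \<open>finite U\<close> by (auto simp: A_def J_def)
  ultimately obtain Q where Q: "Q \<subseteq> A - J" "Q \<noteq> {}"
      "\<forall>i. (\<Sum>x\<in>Q. padded_family u r p x i) = 0"
    using exists_zero_sum_subset_avoiding[of A J D "padded_family u r p"] D(1) p by blast
  define S where "S = {j\<in>I. Inl j \<in> Q}"
  define V where "V = {v\<in>U. Inr (Inl v) \<in> Q}"
  have Q_eq: "Q = Inl ` S \<union> Inr ` Inl ` V \<union> Inr ` Inr ` {}"
    using Q(1) by (auto simp: S_def V_def A_def)
  then have "\<forall>i. (\<Sum>j\<in>S. u j i) = sgn (r i) * int (card {v\<in>V. fst v = i})"
    using Q(3) sum_padded_family[of S V "{}" u r p] I \<open>finite U\<close> by (simp add: S_def V_def)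
  moreover have "S \<noteq> {} \<or> V \<noteq> {}"
    using Q(2) Q_eq by auto
  moreover have "V \<subseteq> (SIGMA i:UNIV. {..<nat \<bar>r i\<bar>})" "S \<subseteq> I"
    by (auto simp: S_def V_def U_def)
  ultimately show ?thesis
    using that conformal_of_balanced_padding[of V r S u] by blast
qed

lemma exists_conformal_subsum:
  fixes u :: "'a \<Rightarrow> 'm::finite \<Rightarrow> int" and b :: "'m \<Rightarrow> real"
  assumes I: "finite I" and D: "0 \<le> D" "\<forall>j\<in>I. \<forall>i. \<bar>u j i\<bar> \<le> D"
    and close: "\<forall>i. \<bar>(\<Sum>j\<in>I. real_of_int (u j i)) - b i\<bar> \<le> real CARD('m) * real_of_int D"
    and size: "(real CARD('m) + 1) * (2 * real CARD('m) * real_of_int D + 1) ^ CARD('m)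
      \<le> real (card I + CARD('m))"
  obtains S where "S \<subseteq> I" "S \<noteq> {}" "\<forall>i. real_of_int (\<Sum>j\<in>S. u j i) \<in> closed_segment 0 (b i)"
proof -
  define r where "r i = (if 0 \<le> b i then \<lfloor>b i\<rfloor> else \<lceil>b i\<rceil>)" for i
  have r_seg: "closed_segment 0 (real_of_int (r i)) \<subseteq> closed_segment 0 (b i)" for i
    by (rule closed_segment_subset)
      (auto simp: r_def closed_segment_eq_real_ivl ceiling_le_iff le_floor_iff)
  have "\<bar>(\<Sum>j\<in>I. u j i) - r i\<bar> \<le> int CARD('m) * D" for i
  proof -
    have "\<bar>b i - r i\<bar> < 1"
      by (auto simp: r_def abs_if) linarith+
    then have "real_of_int \<bar>(\<Sum>j\<in>I. u j i) - r i\<bar> < real_of_int (int CARD('m) * D + 1)"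
      using close[rule_format, of i] by simp
    then show ?thesis
      by (simp only: of_int_less_iff)
  qed
  moreover have "(int CARD('m) + 1) * (2 * int CARD('m) * D + 1) ^ CARD('m)
      \<le> int (card I + CARD('m))"
  proof -
    have "real_of_int ((int CARD('m) + 1) * (2 * int CARD('m) * D + 1) ^ CARD('m))
        \<le> real_of_int (int (card I + CARD('m)))"
      using size by simp
    then show ?thesis
      by (simp only: of_int_le_iff)
  qed
  ultimately obtain S where "S \<subseteq> I" "S \<noteq> {}"
      "\<forall>i. real_of_int (\<Sum>j\<in>S. u j i) \<in> closed_segment 0 (real_of_int (r i))"
    using exists_conformal_subsum_int[OF I D] by blast
  then show ?thesis
    using that r_seg by blast
qed

section \<open>Proximity for separable convex functions\<close>

lemma convex_on_exchange:
  fixes g :: "real \<Rightarrow> real"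
  assumes "convex_on UNIV g" "t \<in> closed_segment 0 (q - p)"
  shows "g (p + t) + g (q - t) \<le> g p + g q"
proof -
  obtain c where c: "0 \<le> c" "c \<le> 1" "t = c * (q - p)"
    using assms(2) by (auto simp: closed_segment_def)
  have "p + t = (1 - c) *\<^sub>R p + c *\<^sub>R q" "q - t = (1 - c) *\<^sub>R q + c *\<^sub>R p"
    using c(3) by (simp_all add: algebra_simps)
  then have "g (p + t) \<le> (1 - c) * g p + c * g q" "g (q - t) \<le> (1 - c) * g q + c * g p"
    using c convex_onD[OF assms(1)] by simp_all
  then show ?thesis
    by (simp add: algebra_simps)
qed

definition restrict_vec :: "'n set \<Rightarrow> real^'n \<Rightarrow> real^'n" where
  "restrict_vec S y = (\<chi> j. if j \<in> S then y $ j else 0)"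

lemma int_mat_vec_add: "int_mat_vec W (x + y) = int_mat_vec W x + int_mat_vec W y"
  by (simp add: int_mat_vec_def vec_eq_iff distrib_left sum.distrib)

lemma int_mat_vec_diff: "int_mat_vec W (x - y) = int_mat_vec W x - int_mat_vec W y"
  by (simp add: int_mat_vec_def vec_eq_iff right_diff_distrib sum_subtractf)

lemma int_mat_vec_restrict_vec:
  "int_mat_vec W (restrict_vec S y) $ i = (\<Sum>j\<in>S. of_int (W $ i $ j) * y $ j)"
  by (simp add: int_mat_vec_def restrict_vec_def if_distrib sum.If_cases Int_def)

lemma separable_convex_exchange:
  fixes g :: "'m::finite \<Rightarrow> real \<Rightarrow> real" and W :: "int ^ 'n::finite ^ 'm"
  assumes convex: "\<And>i. convex_on UNIV (g i)"
    and f_def: "\<And>x. f x = (\<Sum>i\<in>UNIV. g i (int_mat_vec W x $ i))"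
    and conformal: "\<forall>i. int_mat_vec W d $ i \<in> closed_segment 0 (int_mat_vec W (x - z) $ i)"
  shows "f (z + d) + f (x - d) \<le> f z + f x"
proof -
  have "g i (int_mat_vec W (z + d) $ i) + g i (int_mat_vec W (x - d) $ i)
      \<le> g i (int_mat_vec W z $ i) + g i (int_mat_vec W x $ i)" for i
    using convex_on_exchange[OF convex[of i], of "int_mat_vec W d $ i" "int_mat_vec W x $ i"
        "int_mat_vec W z $ i"] conformal
    by (simp add: int_mat_vec_add int_mat_vec_diff)
  then show ?thesis
    by (simp add: f_def sum_mono flip: sum.distrib)
qed

lemma abs_le_max_abs_entry: "\<bar>W $ i $ j\<bar> \<le> max_abs_entry W"
proof -
  have "{\<bar>W $ i $ j\<bar> | i j. True} = (\<lambda>(i, j). \<bar>W $ i $ j\<bar>) ` UNIV"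
    by auto
  then show ?thesis
    unfolding max_abs_entry_def by (intro Max_ge) auto
qed

lemma max_abs_entry_nonneg: "0 \<le> max_abs_entry W"
  using order_trans[OF abs_ge_zero abs_le_max_abs_entry] .

lemma finite_binary_vecs: "finite (binary_vecs :: (real^'n::finite) set)"
proof -
  have "(binary_vecs :: (real^'n) set) \<subseteq> vec_lambda ` (UNIV \<rightarrow>\<^sub>E {0, 1})"
  proof
    fix x :: "real^'n"
    assume "x \<in> binary_vecs"
    then show "x \<in> vec_lambda ` (UNIV \<rightarrow>\<^sub>E {0, 1})"
      by (intro image_eqI[of _ _ "vec_nth x"]) (auto simp: binary_vecs_def)
  qed
  then show ?thesis
    by (rule finite_subset) (simp add: finite_PiE)
qed

lemma exists_closest_minimizer:
  fixes f h :: "'a \<Rightarrow> real"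
  assumes "finite S" "S \<noteq> {}"
  obtains z where "is_minimizer_on f S z" "\<And>z'. is_minimizer_on f S z' \<Longrightarrow> h z \<le> h z'"
proof -
  obtain z0 where "is_arg_min f (\<lambda>x. x \<in> S) z0"
    using ex_is_arg_min_if_finite[OF assms] by blast
  then have "{z. is_minimizer_on f S z} \<noteq> {}"
    by (auto simp: is_arg_min_def is_minimizer_on_def not_less)
  moreover have "finite {z. is_minimizer_on f S z}"
    using assms(1) by (rule finite_subset[rotated]) (auto simp: is_minimizer_on_def)
  ultimately obtain z where "is_arg_min h (\<lambda>z. z \<in> {z. is_minimizer_on f S z}) z"
    using ex_is_arg_min_if_finite by blast
  then show ?thesis
    using that by (auto simp: is_arg_min_def not_less)
qed

lemma exchange_yields_closer_minimizer:
  fixes g :: "'m::finite \<Rightarrow> real \<Rightarrow> real" and W :: "int ^ 'n::finite ^ 'm"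
  assumes convex: "\<And>i. convex_on UNIV (g i)"
    and f_def: "\<And>x. f x = (\<Sum>i\<in>UNIV. g i (int_mat_vec W x $ i))"
    and x: "is_minimizer_on f unit_cube x" and z: "is_minimizer_on f binary_vecs z"
    and S: "S \<noteq> {}" "\<forall>j\<in>S. x $ j \<in> {0, 1} \<and> x $ j \<noteq> z $ j"
    and conformal: "\<forall>i. int_mat_vec W (restrict_vec S (x - z)) $ i
      \<in> closed_segment 0 (int_mat_vec W (x - z) $ i)"
  obtains z' where "is_minimizer_on f binary_vecs z'" "l1_dist x z' < l1_dist x z"
proof -
  define d where "d = restrict_vec S (x - z)"
  have z01: "z $ j \<in> {0, 1}" for j
    using z by (auto simp: is_minimizer_on_def binary_vecs_def)
  have "0 \<le> z $ j \<and> z $ j \<le> 1" for j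
    using z01[of j] by auto
  then have "x - d \<in> unit_cube"
    using x by (auto simp: is_minimizer_on_def unit_cube_def d_def restrict_vec_def)
  then have "f x \<le> f (x - d)"
    using x by (simp add: is_minimizer_on_def)
  moreover have "f (z + d) + f (x - d) \<le> f z + f x"
    using separable_convex_exchange[OF convex f_def] conformal by (simp add: d_def)
  moreover have "z + d \<in> binary_vecs"
    using S(2) z01 by (auto simp: binary_vecs_def d_def restrict_vec_def)
  ultimately have "is_minimizer_on f binary_vecs (z + d)"
    using z by (force simp: is_minimizer_on_def)
  moreover have "l1_dist x (z + d) < l1_dist x z"
    unfolding l1_dist_def
  proof (rule sum_strict_mono_ex1)
    show "\<forall>j\<in>UNIV. \<bar>x $ j - (z + d) $ j\<bar> \<le> \<bar>x $ j - z $ j\<bar>"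
      by (simp add: d_def restrict_vec_def)
    obtain j where "j \<in> S"
      using S(1) by blast
    then show "\<exists>j\<in>UNIV. \<bar>x $ j - (z + d) $ j\<bar> < \<bar>x $ j - z $ j\<bar>"
      using S(2) by (auto simp: d_def restrict_vec_def)
  qed simp
  ultimately show ?thesis
    using that by blast
qed

lemma abs_diff_cube_binary_le_1:
  assumes "x \<in> unit_cube" "z \<in> binary_vecs"
  shows "\<bar>x $ j - z $ j\<bar> \<le> 1"
  using assms by (cases "z $ j = 0") (auto simp: unit_cube_def binary_vecs_def)

lemma l1_dist_le_card_integral_differences:
  assumes "x \<in> unit_cube" "z \<in> binary_vecs"
  shows "l1_dist x z \<le> card {j. x $ j \<in> {0, 1} \<and> x $ j \<noteq> z $ j} + card (fractional_entries x)"
proof -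
  have "l1_dist x z \<le> (\<Sum>j\<in>UNIV. if x $ j \<noteq> z $ j then 1 else 0)"
    unfolding l1_dist_def using abs_diff_cube_binary_le_1[OF assms] by (intro sum_mono) auto
  also have "\<dots> = card {j. x $ j \<noteq> z $ j}"
    by (simp add: sum.If_cases)
  also have "card {j. x $ j \<noteq> z $ j}
      \<le> card ({j. x $ j \<in> {0, 1} \<and> x $ j \<noteq> z $ j} \<union> fractional_entries x)"
    by (intro card_mono) (auto simp: fractional_entries_def)
  also have "\<dots> \<le> card {j. x $ j \<in> {0, 1} \<and> x $ j \<noteq> z $ j} + card (fractional_entries x)"
    by (rule card_Un_le)
  finally show ?thesis
    by simp
qed

lemma abs_int_mat_vec_restrict_vec_le:
  assumes "\<forall>j\<in>S. \<bar>y $ j\<bar> \<le> 1"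
  shows "\<bar>int_mat_vec W (restrict_vec S y) $ i\<bar> \<le> card S * max_abs_entry W"
proof -
  have "\<bar>of_int (W $ i $ j) * y $ j\<bar> \<le> real_of_int (max_abs_entry W)" if "j \<in> S" for j
  proof -
    have "\<bar>of_int (W $ i $ j)\<bar> * \<bar>y $ j\<bar> \<le> real_of_int (max_abs_entry W) * 1"
    proof (rule mult_mono)
      show "\<bar>real_of_int (W $ i $ j)\<bar> \<le> real_of_int (max_abs_entry W)"
        using abs_le_max_abs_entry[of W i j] by (simp flip: of_int_abs)
    qed (use assms that max_abs_entry_nonneg in auto)
    then show ?thesis
      by (simp add: abs_mult)
  qed
  then have "(\<Sum>j\<in>S. \<bar>of_int (W $ i $ j) * y $ j\<bar>) \<le> (\<Sum>j\<in>S. real_of_int (max_abs_entry W))"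
    by (rule sum_mono)
  then show ?thesis
    unfolding int_mat_vec_restrict_vec by (simp add: order_trans[OF sum_abs])
qed

lemma exists_conformal_exchange_set:
  fixes W :: "int ^ 'n::finite ^ 'm::finite"
  assumes x: "x \<in> unit_cube" "card (fractional_entries x) \<le> CARD('m)" and z: "z \<in> binary_vecs"
    and far: "2 * real CARD('m) * (2 * real CARD('m) * real_of_int (max_abs_entry W) + 1) ^ CARD('m)
      < l1_dist x z"
  obtains S where "S \<noteq> {}" "\<forall>j\<in>S. x $ j \<in> {0, 1} \<and> x $ j \<noteq> z $ j"
    "\<forall>i. int_mat_vec W (restrict_vec S (x - z)) $ i \<in> closed_segment 0 (int_mat_vec W (x - z) $ i)"
proof -
  define D where "D = max_abs_entry W"
  define F where "F = fractional_entries x"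
  define I where "I = {j. x $ j \<in> {0, 1} \<and> x $ j \<noteq> z $ j}"
  define u where "u j i = W $ i $ j * (if x $ j = 1 then 1 else -1)" for j i
  have u: "real_of_int (u j i) = of_int (W $ i $ j) * (x - z) $ j" if "j \<in> I" for j i
    using that z by (auto simp: u_def I_def binary_vecs_def)
  have D: "0 \<le> D" "\<forall>j\<in>I. \<forall>i. \<bar>u j i\<bar> \<le> D"
    using max_abs_entry_nonneg abs_le_max_abs_entry[of W] by (auto simp: D_def u_def abs_mult)
  have xz: "x - z = restrict_vec I (x - z) + restrict_vec F (x - z)"
    by (auto simp: vec_eq_iff restrict_vec_def I_def F_def fractional_entries_def)
  have "(\<Sum>j\<in>I. real_of_int (u j i)) - int_mat_vec W (x - z) $ i
      = - int_mat_vec W (restrict_vec F (x - z)) $ i" for i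
    using arg_cong[OF xz, of "\<lambda>y. int_mat_vec W y $ i"] u
    by (simp add: int_mat_vec_add int_mat_vec_restrict_vec)
  moreover have "\<bar>int_mat_vec W (restrict_vec F (x - z)) $ i\<bar> \<le> CARD('m) * real_of_int D" for i
    using abs_int_mat_vec_restrict_vec_le[of F "x - z" W i] abs_diff_cube_binary_le_1[OF x(1) z]
      x(2) D(1) order_trans[OF _ mult_right_mono] by (fastforce simp: F_def D_def)
  ultimately have close: "\<forall>i. \<bar>(\<Sum>j\<in>I. real_of_int (u j i)) - int_mat_vec W (x - z) $ i\<bar>
      \<le> CARD('m) * real_of_int D"
    by simp
  have "(real CARD('m) + 1) * (2 * real CARD('m) * real_of_int D + 1) ^ CARD('m)
      \<le> 2 * real CARD('m) * (2 * real CARD('m) * real_of_int D + 1) ^ CARD('m)"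
    using D(1) by (intro mult_right_mono) auto
  then have size: "(real CARD('m) + 1) * (2 * real CARD('m) * real_of_int D + 1) ^ CARD('m)
      \<le> real (card I + CARD('m))"
    using far l1_dist_le_card_integral_differences[OF x(1) z] x(2) by (simp add: D_def I_def)
  obtain S where S: "S \<subseteq> I" "S \<noteq> {}"
      "\<forall>i. real_of_int (\<Sum>j\<in>S. u j i) \<in> closed_segment 0 (int_mat_vec W (x - z) $ i)"
    by (rule exists_conformal_subsum[OF finite D close size])
  have "int_mat_vec W (restrict_vec S (x - z)) $ i = real_of_int (\<Sum>j\<in>S. u j i)" for i
    using S(1) u by (simp add: int_mat_vec_restrict_vec subset_iff)
  then have "\<forall>i. int_mat_vec W (restrict_vec S (x - z)) $ i
      \<in> closed_segment 0 (int_mat_vec W (x - z) $ i)"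
    using S(3) by simp
  moreover have "\<forall>j\<in>S. x $ j \<in> {0, 1} \<and> x $ j \<noteq> z $ j"
    using S(1) by (auto simp: I_def)
  ultimately show ?thesis
    using that S(2) by blast
qed

theorem mainTheorem6:
  fixes g :: "'m::finite \<Rightarrow> real \<Rightarrow> real"
    and W :: "int ^ 'n::finite ^ 'm"
    and f :: "real ^ 'n \<Rightarrow> real"
    and xstar :: "real ^ 'n"
  assumes convex: "\<And>i. convex_on UNIV (g i)"
    and f_def: "\<And>x. f x = (\<Sum>i\<in>UNIV. g i (int_mat_vec W x $ i))"
    and xmin: "is_minimizer_on f unit_cube xstar"
    and frac: "card (fractional_entries xstar) \<le> CARD('m)"
  shows "\<exists>zstar. is_minimizer_on f binary_vecs zstar \<and>
           l1_dist xstar zstar \<le>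
             2 * real CARD('m) * (2 * real CARD('m) * real_of_int (max_abs_entry W) + 1) ^ CARD('m)"
proof -
  have "0 \<in> (binary_vecs :: (real^'n) set)"
    by (simp add: binary_vecs_def)
  then obtain z where zmin: "is_minimizer_on f binary_vecs z"
    and closest: "\<And>z'. is_minimizer_on f binary_vecs z' \<Longrightarrow> l1_dist xstar z \<le> l1_dist xstar z'"
    using exists_closest_minimizer[OF finite_binary_vecs] by blast
  have "l1_dist xstar z
      \<le> 2 * real CARD('m) * (2 * real CARD('m) * real_of_int (max_abs_entry W) + 1) ^ CARD('m)"
  proof (rule ccontr)
    assume "\<not> ?thesis"
    then obtain S where "S \<noteq> {}" "\<forall>j\<in>S. xstar $ j \<in> {0, 1} \<and> xstar $ j \<noteq> z $ j"
      "\<forall>i. int_mat_vec W (restrict_vec S (xstar - z)) $ i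
        \<in> closed_segment 0 (int_mat_vec W (xstar - z) $ i)"
      using exists_conformal_exchange_set[of xstar z W] xmin zmin frac
      by (auto simp: is_minimizer_on_def not_le)
    then obtain z' where "is_minimizer_on f binary_vecs z'" "l1_dist xstar z' < l1_dist xstar z"
      by (rule exchange_yields_closer_minimizer[OF convex f_def xmin zmin])
    then show False
      using closest by fastforce
  qed
  then show ?thesis
    using zmin by blast
qed

end
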